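(* Let $\Lambda$ be a normal subshift and $\mathfrak L_\Lambda^{\min}$ its minimal presentation. Then $\mathfrak L_\Lambda^{\min}$ satisfies condition (I).
   Context: Subshifts over a finite alphabet $\Sigma$: $B_l(\Lambda)$, $B_*(\Lambda)$ admissible words; $X_\Lambda$ the right one-sided subshift. $\Gamma_l^-(\mu)=\{\nu\in B_l(\Lambda):\nu\mu\in B_*(\Lambda)\}$, $\Gamma_*^+(\mu)=\{\nu:\mu\nu\in B_*(\Lambda)\}$; $\mu$ is $l$-synchronizing if $\Gamma_l^-(\mu)=\Gamma_l^-(\mu\omega)$ for all $\omega\in\Gamma_*^+(\mu)$, $S_l(\Lambda)$ the set of these; $\mu\sim_l\nu$ iff $\Gamma_l^-(\mu)=\Gamma_l^-(\nu)$. $\Lambda$ is normal if irreducible, infinite as a set, and for every $\eta\in B_l(\Lambda)$ and $k>l$ there is $\nu\in S_k(\Lambda)$ with $\eta\nu\in S_{k-l}(\Lambda)$. The minimal presentation $\mathfrak L_\Lambda^{\min}$ is the labeled Bratteli-type diagram with vertex sets $V_0$ a singleton and $V_l=S_l(\Lambda)/\!\sim_l$ for $l\ge1$, an edge labeled $\alpha$ from $[\alpha\nu]_l$ to $[\nu]_{l+1}$ for every $\nu\in S_{l+1}(\Lambda)$ and $\alpha\in\Sigma$ with $\alpha\nu\in B_*(\Lambda)$, and maps $\iota([\nu]_{l+1})=[\nu]_l$. For a vertex $v\in V_l$, $\Gamma^+_\infty(v)$ is the set of label sequences $(\lambda(e_1),\lambda(e_2),\dots)$ of infinite paths with $s(e_1)=v$,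 $e_i$ an edge from level $l+i-1$ to level $l+i$ and $t(e_i)=s(e_{i+1})$. The system satisfies condition (I) if $\Gamma^+_\infty(v)$ contains at least two distinct sequences for every vertex $v$. *)

theory Defs
  imports Main
begin

definition word_at :: "(int \<Rightarrow> 'a) \<Rightarrow> int \<Rightarrow> nat \<Rightarrow> 'a list" where
  "word_at x n k = map (\<lambda>i. x (n + int i)) [0..<k]"

definition Bstar :: "(int \<Rightarrow> 'a) set \<Rightarrow> 'a list set" where
  "Bstar L = {w. \<exists>x\<in>L. \<exists>n. w = word_at x n (length w)}"

definition Bl :: "(int \<Rightarrow> 'a) set \<Rightarrow> nat \<Rightarrow> 'a list set" where
  "Bl L l = {w \<in> Bstar L. length w = l}"

text \<open>Subshift: shift-invariant (sigma(L) = L) and closed in the product topology,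
  i.e. a configuration all of whose finite windows are admissible belongs to L.\<close>
definition is_subshift :: "(int \<Rightarrow> 'a::finite) set \<Rightarrow> bool" where
  "is_subshift L \<longleftrightarrow>
     (\<lambda>x n. x (n + 1)) ` L = L \<and>
     (\<forall>x. (\<forall>n k. word_at x n k \<in> Bstar L) \<longrightarrow> x \<in> L)"

definition Gamma_minus :: "(int \<Rightarrow> 'a) set \<Rightarrow> nat \<Rightarrow> 'a list \<Rightarrow> 'a list set" where
  "Gamma_minus L l \<mu> = {\<nu> \<in> Bl L l. \<nu> @ \<mu> \<in> Bstar L}"

definition Gamma_plus :: "(int \<Rightarrow> 'a) set \<Rightarrow> 'a list \<Rightarrow> 'a list set" where
  "Gamma_plus L \<mu> = {\<nu>. \<mu> @ \<nu> \<in> Bstar L}"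

definition Sync :: "(int \<Rightarrow> 'a) set \<Rightarrow> nat \<Rightarrow> 'a list set" where
  "Sync L l = {\<mu> \<in> Bstar L. \<forall>\<omega>\<in>Gamma_plus L \<mu>. Gamma_minus L l \<mu> = Gamma_minus L l (\<mu> @ \<omega>)}"

definition irreducible_shift :: "(int \<Rightarrow> 'a) set \<Rightarrow> bool" where
  "irreducible_shift L \<longleftrightarrow>
     (\<forall>\<mu>\<in>Bstar L. \<forall>\<nu>\<in>Bstar L. \<exists>\<omega>. \<mu> @ \<omega> @ \<nu> \<in> Bstar L)"

definition normal_shift :: "(int \<Rightarrow> 'a::finite) set \<Rightarrow> bool" where
  "normal_shift L \<longleftrightarrow> is_subshift L \<and> irreducible_shift L \<and> infinite L \<and>
     (\<forall>l \<eta> k. \<eta> \<in> Bl L l \<and> l < k \<longrightarrow>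
        (\<exists>\<nu>\<in>Sync L k. \<eta> @ \<nu> \<in> Sync L (k - l)))"

definition sim_rel :: "(int \<Rightarrow> 'a) set \<Rightarrow> nat \<Rightarrow> ('a list \<times> 'a list) set" where
  "sim_rel L l = {(\<mu>, \<nu>). \<mu> \<in> Sync L l \<and> \<nu> \<in> Sync L l \<and> Gamma_minus L l \<mu> = Gamma_minus L l \<nu>}"

definition cls :: "(int \<Rightarrow> 'a) set \<Rightarrow> nat \<Rightarrow> 'a list \<Rightarrow> 'a list set" where
  "cls L l \<mu> = sim_rel L l `` {\<mu>}"

text \<open>Vertex set V_l = S_l / ~_l.  For l = 0, S_0 = B_* and ~_0 has a single class,
  so V_0 is the singleton of the paper.\<close>
definition Vmin :: "(int \<Rightarrow> 'a) set \<Rightarrow> nat \<Rightarrow> 'a list set set" where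
  "Vmin L l = Sync L l // sim_rel L l"

definition Emin :: "(int \<Rightarrow> 'a) set \<Rightarrow> nat \<Rightarrow> 'a list set \<Rightarrow> 'a \<Rightarrow> 'a list set \<Rightarrow> bool" where
  "Emin L l v a w \<longleftrightarrow>
     (\<exists>\<nu>\<in>Sync L (Suc l). a # \<nu> \<in> Bstar L \<and> v = cls L l (a # \<nu>) \<and> w = cls L (Suc l) \<nu>)"

definition Gamma_inf :: "(int \<Rightarrow> 'a) set \<Rightarrow> nat \<Rightarrow> 'a list set \<Rightarrow> (nat \<Rightarrow> 'a) set" where
  "Gamma_inf L l v = {x. \<exists>vs :: nat \<Rightarrow> 'a list set.
      vs 0 = v \<and> (\<forall>i. Emin L (l + i) (vs i) (x i) (vs (Suc i)))}"

definition condition_I :: "(int \<Rightarrow> 'a) set \<Rightarrow> bool" where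
  "condition_I L \<longleftrightarrow>
     (\<forall>l. \<forall>v\<in>Vmin L l. \<exists>x\<in>Gamma_inf L l v. \<exists>y\<in>Gamma_inf L l v. x \<noteq> y)"

end

theory Submission imports Defs begin

text \<open>Every vertex \<open>[\<mu>]\<^sub>l\<close> is the source of an infinite path whose labels begin with any
  prescribed admissible right extension \<open>\<mu>\<omega>\<close> of \<open>\<mu>\<close>: normality lets one always pass from an
  \<open>l\<close>-synchronizing word to an \<open>(l+1)\<close>-synchronizing suffix of one of its extensions without
  leaving the \<open>\<sim>\<^sub>l\<close>-class. So it suffices that \<open>\<mu>\<close> has two distinct admissible right
  extensions of the same length. If it had not, the future of \<open>\<mu>\<close> would be forced;
  irreducibility makes some \<open>\<mu>\<omega>\<mu>\<close> admissible, so this forced future is periodic, every admissible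
  word occurs in it, and \<open>\<Lambda>\<close> would consist of periodic points of a single period, hence be
  finite.\<close>

lemma length_word_at [simp]: "length (word_at x n k) = k"
  by (simp add: word_at_def)

lemma word_at_add: "word_at x n (a + b) = word_at x n a @ word_at x (n + int a) b"
proof -
  have "[0..<a + b] = [0..<a] @ map (\<lambda>i. i + a) [0..<b]"
    by (metis add.commute add_0 map_add_upt upt_add_eq_append zero_le)
  then show ?thesis
    by (simp add: word_at_def algebra_simps)
qed

lemma Bstar_infix:
  assumes "u @ v @ w \<in> Bstar L"
  shows "v \<in> Bstar L"
proof -
  obtain x n where x: "x \<in> L" and "u @ v @ w = word_at x n (length u + length v + length w)"
    using assms unfolding Bstar_def by (auto simp: add.assoc)
  then have "v = word_at x (n + int (length u)) (length v)"
    by (simp add: word_at_add add.assoc append_eq_append_conv)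
  with x show ?thesis
    unfolding Bstar_def by auto
qed

lemma Bstar_prefix: "u @ v \<in> Bstar L \<Longrightarrow> u \<in> Bstar L"
  using Bstar_infix[of "[]" u v] by simp

lemma Bstar_suffix: "u @ v \<in> Bstar L \<Longrightarrow> v \<in> Bstar L"
  using Bstar_infix[of u v "[]"] by simp

lemma Bstar_ConsD: "c # w \<in> Bstar L \<Longrightarrow> w \<in> Bstar L"
  using Bstar_suffix[of "[c]" w] by simp

lemma Bstar_extend_right:
  assumes "w \<in> Bstar L"
  shows "\<exists>\<theta>. length \<theta> = m \<and> w @ \<theta> \<in> Bstar L"
proof -
  obtain x n where x: "x \<in> L" and w: "w = word_at x n (length w)"
    using assms unfolding Bstar_def by auto
  define \<theta> where "\<theta> = word_at x (n + int (length w)) m"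
  have "w @ \<theta> = word_at x n (length (w @ \<theta>))"
    using w by (simp add: \<theta>_def word_at_add)
  with x have "w @ \<theta> \<in> Bstar L"
    unfolding Bstar_def by blast
  then show ?thesis
    by (intro exI[of _ \<theta>]) (simp add: \<theta>_def)
qed

lemma Bstar_extend_left:
  assumes "w \<in> Bstar L"
  shows "\<exists>c. c # w \<in> Bstar L"
proof -
  obtain x n where x: "x \<in> L" and w: "w = word_at x n (length w)"
    using assms unfolding Bstar_def by auto
  have "word_at x (n - 1) (1 + length w) = x (n - 1) # w"
    using w by (subst word_at_add) (simp add: word_at_def)
  with x show ?thesis
    unfolding Bstar_def by (metis (mono_tags, lifting) length_Cons mem_Collect_eq plus_1_eq_Suc)
qed

lemma Gamma_minus_Suc_cong:
  assumes "Gamma_minus L (Suc k) \<mu> = Gamma_minus L (Suc k) \<mu>'"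
  shows "Gamma_minus L k \<mu> = Gamma_minus L k \<mu>'"
proof -
  have *: "\<eta> \<in> Gamma_minus L k \<mu> \<longleftrightarrow> length \<eta> = k \<and> (\<exists>c. c # \<eta> \<in> Gamma_minus L (Suc k) \<mu>)"
    for \<eta> \<mu>
  proof
    assume "\<eta> \<in> Gamma_minus L k \<mu>"
    then have "length \<eta> = k" "\<eta> @ \<mu> \<in> Bstar L"
      by (auto simp: Gamma_minus_def Bl_def)
    moreover obtain c where "c # \<eta> @ \<mu> \<in> Bstar L"
      using Bstar_extend_left[OF \<open>\<eta> @ \<mu> \<in> Bstar L\<close>] by blast
    ultimately show "length \<eta> = k \<and> (\<exists>c. c # \<eta> \<in> Gamma_minus L (Suc k) \<mu>)"
      using Bstar_prefix[of "c # \<eta>" \<mu>] by (auto simp: Gamma_minus_def Bl_def)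
  qed (auto simp: Gamma_minus_def Bl_def dest: Bstar_ConsD)
  show ?thesis
    using assms by (auto simp: *)
qed

lemma Gamma_minus_Cons_cong:
  assumes "Gamma_minus L (Suc k) \<nu> = Gamma_minus L (Suc k) \<nu>'"
  shows "Gamma_minus L k (a # \<nu>) = Gamma_minus L k (a # \<nu>')"
proof -
  have *: "\<eta> \<in> Gamma_minus L k (a # \<nu>) \<longleftrightarrow> length \<eta> = k \<and> \<eta> @ [a] \<in> Gamma_minus L (Suc k) \<nu>"
    for \<nu> \<eta>
    using Bstar_prefix[of "\<eta> @ [a]" \<nu>] Bstar_prefix[of \<eta> "a # \<nu>"]
    by (auto simp: Gamma_minus_def Bl_def)
  show ?thesis
    using assms by (auto simp: *)
qed

lemma Sync_imp_Bstar: "\<mu> \<in> Sync L k \<Longrightarrow> \<mu> \<in> Bstar L"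
  by (simp add: Sync_def)

lemma Gamma_minus_Sync_append:
  "\<mu> \<in> Sync L k \<Longrightarrow> \<mu> @ \<omega> \<in> Bstar L \<Longrightarrow> Gamma_minus L k (\<mu> @ \<omega>) = Gamma_minus L k \<mu>"
  by (simp add: Sync_def Gamma_plus_def)

lemma Sync_append:
  assumes "\<mu> \<in> Sync L k" "\<mu> @ \<omega> \<in> Bstar L"
  shows "\<mu> @ \<omega> \<in> Sync L k"
proof -
  have "Gamma_minus L k (\<mu> @ \<omega> @ \<omega>') = Gamma_minus L k \<mu>" if "\<mu> @ \<omega> @ \<omega>' \<in> Bstar L" for \<omega>'
    using Gamma_minus_Sync_append[OF assms(1) that] .
  then show ?thesis
    using assms(2) Gamma_minus_Sync_append[OF assms] by (simp add: Sync_def Gamma_plus_def)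
qed

lemma Sync_Suc_subset: "Sync L (Suc k) \<subseteq> Sync L k"
  unfolding Sync_def using Gamma_minus_Suc_cong by blast

lemma Sync_Cons:
  assumes "\<nu> \<in> Sync L (Suc k)" "a # \<nu> \<in> Bstar L"
  shows "a # \<nu> \<in> Sync L k"
proof -
  have "Gamma_minus L k (a # \<nu>) = Gamma_minus L k (a # \<nu> @ \<omega>)"
    if "a # \<nu> @ \<omega> \<in> Bstar L" for \<omega>
    using assms(1) Bstar_ConsD[OF that]
    by (intro Gamma_minus_Cons_cong) (simp add: Sync_def Gamma_plus_def)
  with assms(2) show ?thesis
    by (simp add: Sync_def Gamma_plus_def)
qed

lemma append_Sync:
  "\<rho> @ \<nu> \<in> Bstar L \<Longrightarrow> \<nu> \<in> Sync L (k + length \<rho>) \<Longrightarrow> \<rho> @ \<nu> \<in> Sync L k"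
proof (induction \<rho> arbitrary: k)
  case (Cons a \<rho>)
  then have "\<rho> @ \<nu> \<in> Sync L (Suc k)"
    by (simp add: Bstar_ConsD)
  with Cons.prems(1) show ?case
    by (simp add: Sync_Cons)
qed simp

lemma cls_Sync_append:
  assumes "\<mu> \<in> Sync L k" "\<mu> @ \<omega> \<in> Bstar L"
  shows "cls L k (\<mu> @ \<omega>) = cls L k \<mu>"
  using assms Sync_append[OF assms] Gamma_minus_Sync_append[OF assms]
  by (auto simp: cls_def sim_rel_def)

lemma normal_shiftD:
  "normal_shift L \<Longrightarrow> \<eta> \<in> Bl L l \<Longrightarrow> l < k \<Longrightarrow> \<exists>\<nu>\<in>Sync L k. \<eta> @ \<nu> \<in> Sync L (k - l)"
  unfolding normal_shift_def by blast

lemma Emin_from_Sync: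
  assumes N: "normal_shift L" and w: "w \<in> Sync L k"
  shows "\<exists>a r \<theta>. w @ \<theta> = a # r \<and> r \<in> Sync L (Suc k) \<and> Emin L k (cls L k w) a (cls L (Suc k) r)"
proof -
  obtain c where c: "w @ [c] \<in> Bstar L"
    using Bstar_extend_right[OF Sync_imp_Bstar[OF w], of 1] by (auto simp: length_Suc_conv)
  obtain a \<rho> where a\<rho>: "w @ [c] = a # \<rho>"
    by (cases "w @ [c]") auto
  have "a # \<rho> \<in> Bl L (Suc (length \<rho>))"
    using c a\<rho> by (simp add: Bl_def)
  from normal_shiftD[OF N this, of "Suc (length \<rho>) + Suc k"]
  obtain \<nu> where \<nu>: "\<nu> \<in> Sync L (Suc (Suc k) + length \<rho>)" and a\<rho>\<nu>: "a # \<rho> @ \<nu> \<in> Sync L (Suc k)"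
    by (auto simp: ac_simps)
  have "\<rho> @ \<nu> \<in> Sync L (Suc (Suc k))"
    using append_Sync[OF Bstar_ConsD[OF Sync_imp_Bstar[OF a\<rho>\<nu>]] \<nu>] .
  then have \<rho>\<nu>: "\<rho> @ \<nu> \<in> Sync L (Suc k)"
    using Sync_Suc_subset by blast
  have extension: "w @ c # \<nu> = a # \<rho> @ \<nu>"
    using a\<rho> by (metis append_Cons append_assoc append_Nil)
  have "cls L k (a # \<rho> @ \<nu>) = cls L k w"
    using cls_Sync_append[OF w, of "c # \<nu>"] Sync_imp_Bstar[OF a\<rho>\<nu>] unfolding extension by simp
  then have "Emin L k (cls L k w) a (cls L (Suc k) (\<rho> @ \<nu>))"
    unfolding Emin_def using \<rho>\<nu> Sync_imp_Bstar[OF a\<rho>\<nu>] by metis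
  with extension \<rho>\<nu> show ?thesis
    by blast
qed

lemma extension_chain_labels:
  assumes "\<And>n. \<exists>\<theta>. ws n @ \<theta> = x n # ws (Suc n)"
  shows "map x [0..<length (ws 0)] = ws 0"
proof -
  have "\<exists>\<rho>. ws 0 @ \<rho> = map x [0..<n] @ ws n" for n
  proof (induction n)
    case (Suc n)
    then obtain \<rho> \<theta> where \<rho>: "ws 0 @ \<rho> = map x [0..<n] @ ws n"
      and \<theta>: "ws n @ \<theta> = x n # ws (Suc n)"
      using assms by blast
    have "ws 0 @ \<rho> @ \<theta> = map x [0..<n] @ (ws n @ \<theta>)"
      using \<rho> by (metis append.assoc)
    also have "\<dots> = map x [0..<Suc n] @ ws (Suc n)"
      using \<theta> by simp
    finally show ?case
      by blast
  qed simp
  then obtain \<rho> where "ws 0 @ \<rho> = map x [0..<length (ws 0)] @ ws (length (ws 0))"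
    by blast
  then have "take (length (ws 0)) (ws 0 @ \<rho>)
      = take (length (ws 0)) (map x [0..<length (ws 0)] @ ws (length (ws 0)))"
    by (rule arg_cong)
  then show ?thesis
    by simp
qed

lemma Gamma_inf_prefix:
  assumes N: "normal_shift L" and w: "w \<in> Sync L l"
  shows "\<exists>x \<in> Gamma_inf L l (cls L l w). map x [0..<length w] = w"
proof -
  define Step where "Step n u a u' \<longleftrightarrow>
    (\<exists>\<theta>. u @ \<theta> = a # u') \<and> Emin L (l + n) (cls L (l + n) u) a (cls L (l + Suc n) u')"
    for n u a u'
  obtain ws where ws: "\<And>n. ws n \<in> Sync L (l + n) \<and> (n = 0 \<longrightarrow> ws n = w)"
    and ws_step: "\<And>n. \<exists>a. Step n (ws n) a (ws (Suc n))"
  proof -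
    have "\<exists>ws. \<forall>n. (ws n \<in> Sync L (l + n) \<and> (n = 0 \<longrightarrow> ws n = w))
        \<and> (\<exists>a. Step n (ws n) a (ws (Suc n)))"
    proof (rule dependent_nat_choice)
      fix u n
      assume "u \<in> Sync L (l + n) \<and> (n = 0 \<longrightarrow> u = w)"
      then show "\<exists>u'. (u' \<in> Sync L (l + Suc n) \<and> (Suc n = 0 \<longrightarrow> u' = w)) \<and> (\<exists>a. Step n u a u')"
        using Emin_from_Sync[OF N] by (fastforce simp: Step_def)
    qed (use w in auto)
    then show thesis
      using that by blast
  qed
  obtain x where x: "\<And>n. Step n (ws n) (x n) (ws (Suc n))"
    using ws_step by metis
  have "x \<in> Gamma_inf L l (cls L l w)"
    unfolding Gamma_inf_def
    using ws[of 0] x by (intro CollectI exI[of _ "\<lambda>n. cls L (l + n) (ws n)"]) (auto simp: Step_def)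
  moreover have "map x [0..<length w] = w"
    using extension_chain_labels[of ws x] x ws[of 0] by (auto simp: Step_def)
  ultimately show ?thesis
    by blast
qed

lemma Gamma_inf_extension:
  assumes "normal_shift L" "\<mu> \<in> Sync L l" "\<mu> @ \<omega> \<in> Bstar L"
  shows "\<exists>x \<in> Gamma_inf L l (cls L l \<mu>). map x [0..<length (\<mu> @ \<omega>)] = \<mu> @ \<omega>"
  using Gamma_inf_prefix[OF assms(1) Sync_append[OF assms(2,3)]]
  by (simp only: cls_Sync_append[OF assms(2,3)])

definition right_determined :: "(int \<Rightarrow> 'a) set \<Rightarrow> 'a list \<Rightarrow> bool" where
  "right_determined L \<mu> \<longleftrightarrow>
     (\<forall>\<omega>1 \<omega>2. length \<omega>1 = length \<omega>2 \<longrightarrow> \<mu> @ \<omega>1 \<in> Bstar L \<longrightarrow> \<mu> @ \<omega>2 \<in> Bstar L \<longrightarrow> \<omega>1 = \<omega>2)"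

lemma right_determinedD:
  "right_determined L \<mu> \<Longrightarrow> length \<omega>1 = length \<omega>2 \<Longrightarrow> \<mu> @ \<omega>1 \<in> Bstar L \<Longrightarrow> \<mu> @ \<omega>2 \<in> Bstar L
    \<Longrightarrow> \<omega>1 = \<omega>2"
  unfolding right_determined_def by blast

lemma right_determined_append:
  assumes "right_determined L \<mu>"
  shows "right_determined L (\<mu> @ \<nu>)"
  unfolding right_determined_def
proof (intro allI impI)
  fix \<omega>1 \<omega>2 :: "'a list"
  assume "length \<omega>1 = length \<omega>2" "(\<mu> @ \<nu>) @ \<omega>1 \<in> Bstar L" "(\<mu> @ \<nu>) @ \<omega>2 \<in> Bstar L"
  then show "\<omega>1 = \<omega>2"
    using right_determinedD[OF assms, of "\<nu> @ \<omega>1" "\<nu> @ \<omega>2"] by simp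
qed

lemma right_determined_repeat:
  assumes det: "right_determined L \<mu>" and return: "\<mu> @ \<omega> @ \<mu> \<in> Bstar L"
  shows "\<mu> @ concat (replicate k (\<omega> @ \<mu>)) \<in> Bstar L"
proof (induction k)
  case 0
  show ?case
    using Bstar_prefix[of \<mu>] return by simp
next
  case (Suc k)
  define R where "R = concat (replicate k (\<omega> @ \<mu>))"
  obtain \<theta> where \<theta>: "length \<theta> = length (\<omega> @ \<mu>)" "\<mu> @ R @ \<theta> \<in> Bstar L"
    using Bstar_extend_right[OF Suc.IH[folded R_def], of "length (\<omega> @ \<mu>)"] by auto
  have "\<mu> @ R = concat (replicate k (\<mu> @ \<omega>)) @ \<mu>"
    unfolding R_def by (induction k) auto
  then have "\<mu> @ \<theta> \<in> Bstar L"
    using \<theta>(2) Bstar_suffix[of "concat (replicate k (\<mu> @ \<omega>))"] by (metis append.assoc)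
  then have "\<theta> = \<omega> @ \<mu>"
    using right_determinedD[OF det \<theta>(1)] return by simp
  moreover have "concat (replicate (Suc k) (\<omega> @ \<mu>)) = R @ \<omega> @ \<mu>"
    unfolding R_def by (simp flip: replicate_append_same)
  ultimately show ?case
    using \<theta>(2) by simp
qed

lemma concat_replicate_nth:
  "j < k * length p \<Longrightarrow> concat (replicate k p) ! j = p ! (j mod length p)"
proof (induction k arbitrary: j)
  case (Suc k)
  show ?case
  proof (cases "j < length p")
    case False
    then have "j - length p < k * length p"
      using Suc.prems by simp
    then show ?thesis
      using False Suc.IH[of "j - length p"] by (simp add: nth_append le_mod_geq)
  qed (simp add: nth_append)
qed simp

text \<open>The unique future of \<open>\<mu>\<close> is \<open>(\<omega>\<mu>)\<^sup>\<infinity>\<close>, so any \<open>u\<close> following \<open>\<mu>\<zeta>\<close> is a factor of it.\<close>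
lemma right_determined_follower_periodic:
  assumes det: "right_determined L \<mu>" and return: "\<mu> @ \<omega> @ \<mu> \<in> Bstar L"
    and u: "\<mu> @ \<zeta> @ u \<in> Bstar L" and "\<mu> \<noteq> []" and i: "i + length (\<omega> @ \<mu>) < length u"
  shows "u ! i = u ! (i + length (\<omega> @ \<mu>))"
proof -
  define p where "p = \<omega> @ \<mu>"
  define M where "M = length (\<zeta> @ u)"
  define R where "R = concat (replicate M p)"
  have q: "length p > 0"
    using \<open>\<mu> \<noteq> []\<close> by (simp add: p_def)
  have len_R: "length R = M * length p"
    by (simp add: R_def length_concat sum_list_replicate)
  have "(\<mu> @ take M R) @ drop M R \<in> Bstar L"
    using right_determined_repeat[OF det return, of M] by (simp add: R_def p_def)
  then have prefix: "\<mu> @ take M R \<in> Bstar L"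
    by (rule Bstar_prefix)
  have M_le: "M \<le> M * length p"
    using q by (simp add: Suc_le_eq)
  then have "length (take M R) = length (\<zeta> @ u)"
    using len_R by (simp add: M_def)
  then have \<zeta>u: "\<zeta> @ u = take M R"
    using right_determinedD[OF det _ u prefix] by simp
  have at_R: "u ! j = R ! (length \<zeta> + j)" if "j < length u" for j
    using arg_cong[OF \<zeta>u, of "\<lambda>w. w ! (length \<zeta> + j)"] that by (simp add: M_def)
  have bound: "length \<zeta> + i + length p < M * length p"
  proof (rule less_le_trans[OF _ M_le])
    show "length \<zeta> + i + length p < M"
      using i[folded p_def] by (simp add: M_def)
  qed
  have "u ! (i + length p) = p ! ((length \<zeta> + i + length p) mod length p)"
    using at_R[of "i + length p"] bound i[folded p_def]
    by (simp add: R_def concat_replicate_nth add.assoc)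
  also have "\<dots> = u ! i"
    using at_R[of i] bound i[folded p_def] by (simp add: R_def concat_replicate_nth)
  finally show ?thesis
    by (simp add: p_def)
qed

lemma right_determined_imp_periodic:
  assumes irr: "irreducible_shift L" and \<mu>: "\<mu> \<in> Bstar L" "\<mu> \<noteq> []"
    and det: "right_determined L \<mu>"
  shows "\<exists>q>0. \<forall>x\<in>L. \<forall>m. x (m + int q) = x m"
proof -
  obtain \<omega> where return: "\<mu> @ \<omega> @ \<mu> \<in> Bstar L"
    using irr \<mu>(1) unfolding irreducible_shift_def by blast
  define q where "q = length (\<omega> @ \<mu>)"
  have "x (m + int q) = x m" if x: "x \<in> L" for x m
  proof -
    define u where "u = word_at x m (Suc q)"
    have "u \<in> Bstar L"
      using x unfolding Bstar_def u_def by fastforce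
    then obtain \<zeta> where "\<mu> @ \<zeta> @ u \<in> Bstar L"
      using irr \<mu>(1) unfolding irreducible_shift_def by blast
    then have "u ! 0 = u ! q"
      using right_determined_follower_periodic[OF det return _ \<mu>(2), of \<zeta> u 0]
      by (simp add: q_def u_def)
    then show ?thesis
      by (simp add: u_def word_at_def del: upt_Suc)
  qed
  moreover have "q > 0"
    using \<mu>(2) by (simp add: q_def)
  ultimately show ?thesis
    by blast
qed

lemma periodic_int_multiple:
  fixes x :: "int \<Rightarrow> 'a"
  assumes "\<And>m. x (m + q) = x m"
  shows "x (m + k * q) = x m"
proof (induction k rule: int_induct[where k = 0])
  case (step1 k)
  then show ?case
    using assms[of "m + k * q"] by (simp add: algebra_simps)
next
  case (step2 k)
  then show ?case
    using assms[of "m + (k - 1) * q"] by (simp add: algebra_simps)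
qed simp

lemma finite_if_periodic:
  fixes L :: "(int \<Rightarrow> 'a::finite) set"
  assumes q: "q > 0" and per: "\<forall>x\<in>L. \<forall>m. x (m + int q) = x m"
  shows "finite L"
proof -
  have window: "x m = word_at x 0 q ! nat (m mod int q)" if "x \<in> L" for x m
  proof -
    have "x m = x (m + (- (m div int q)) * int q)"
      using periodic_int_multiple[of x "int q"] per that by metis
    also have "m + (- (m div int q)) * int q = m mod int q"
      by (simp add: minus_div_mult_eq_mod [symmetric])
    finally show ?thesis
      using q by (simp add: word_at_def nat_less_iff)
  qed
  have "inj_on (\<lambda>x. word_at x 0 q) L"
  proof (rule inj_onI)
    fix x y
    assume "x \<in> L" "y \<in> L" "word_at x 0 q = word_at y 0 q"
    then show "x = y"
      using window[of x] window[of y] by auto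
  qed
  moreover have "(\<lambda>x. word_at x 0 q) ` L \<subseteq> {w. set w \<subseteq> UNIV \<and> length w = q}"
    by auto
  then have "finite ((\<lambda>x. word_at x 0 q) ` L)"
    by (rule finite_subset) (rule finite_lists_length_eq[OF finite_UNIV])
  ultimately show ?thesis
    by (rule finite_imageD[rotated])
qed

lemma not_right_determined:
  fixes L :: "(int \<Rightarrow> 'a::finite) set"
  assumes "irreducible_shift L" "infinite L" "\<mu> \<in> Bstar L"
  shows "\<not> right_determined L \<mu>"
proof
  assume "right_determined L \<mu>"
  then have det: "right_determined L (\<mu> @ [c])" for c
    by (rule right_determined_append)
  obtain c where "\<mu> @ [c] \<in> Bstar L"
    using Bstar_extend_right[OF assms(3), of 1] by (auto simp: length_Suc_conv)
  then show False
    using right_determined_imp_periodic[OF assms(1) _ _ det] finite_if_periodic assms(2) by blast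
qed

theorem proposition2p14:
  fixes L :: "(int \<Rightarrow> 'a::finite) set"
  assumes "normal_shift L"
  shows "condition_I L"
  unfolding condition_I_def
proof (intro allI ballI)
  fix l v
  assume "v \<in> Vmin L l"
  then obtain \<mu> where \<mu>: "\<mu> \<in> Sync L l" and v: "v = cls L l \<mu>"
    unfolding Vmin_def quotient_def cls_def by blast
  have "irreducible_shift L" "infinite L"
    using assms by (auto simp: normal_shift_def)
  then obtain \<omega>1 \<omega>2 where len: "length \<omega>1 = length \<omega>2" and "\<omega>1 \<noteq> \<omega>2"
    and \<omega>: "\<mu> @ \<omega>1 \<in> Bstar L" "\<mu> @ \<omega>2 \<in> Bstar L"
    using not_right_determined[OF _ _ Sync_imp_Bstar[OF \<mu>]] unfolding right_determined_def by blast
  obtain x where x: "x \<in> Gamma_inf L l v" and x_labels: "map x [0..<length (\<mu> @ \<omega>1)] = \<mu> @ \<omega>1"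
    using Gamma_inf_extension[OF assms \<mu> \<omega>(1)] v by blast
  obtain y where y: "y \<in> Gamma_inf L l v" and y_labels: "map y [0..<length (\<mu> @ \<omega>2)] = \<mu> @ \<omega>2"
    using Gamma_inf_extension[OF assms \<mu> \<omega>(2)] v by blast
  have "x \<noteq> y"
    using x_labels y_labels len \<open>\<omega>1 \<noteq> \<omega>2\<close> by auto
  with x y show "\<exists>x\<in>Gamma_inf L l v. \<exists>y\<in>Gamma_inf L l v. x \<noteq> y"
    by blast
qed

end
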